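(* Let $F(z,\zeta,\bar z,\bar\zeta)$ be real-analytic near $0$ with $F_{z\bar z}\neq0$ and $F_{z\bar z}F_{\zeta\bar\zeta}-F_{\zeta\bar z}F_{z\bar\zeta}\equiv0$. For every multiindex $(a,b,c,d)\in\mathbb{N}^4$ with $b\geq1$ and $d\geq1$, setting $n:=a+b+c+d$, there exist a polynomial $P_{a,b,c,d}$ (not depending on $F$) and an integer $N_{a,b,c,d}\geq1$ such that $$F_{z^a\zeta^b\bar z^c\bar\zeta^d}\equiv\frac{1}{(F_{z\bar z})^{N_{a,b,c,d}}}\,P_{a,b,c,d}\Big(\{F_{z^{a'}\bar z^{c'}}\}_{a'+c'\leq n},\ \{F_{z^{a'}\zeta^{b'}\bar z^{c'}}\}_{a'+b'+c'\leq n},\ \{F_{z^{a'}\bar z^{c'}\bar\zeta^{d'}}\}_{a'+c'+d'\leq n}\Big).$$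
   Context: Subscripts denote partial derivatives, e.g. $F_{z^a\zeta^b\bar z^c\bar\zeta^d}=\partial_z^a\partial_\zeta^b\partial_{\bar z}^c\partial_{\bar\zeta}^dF$. *)

theory Defs
  imports "HOL-Analysis.Analysis"
begin

text \<open>A function of the four independent complex variables z, zeta, zbar, zetabar
  (the complexification of a real-analytic function of z, zeta).\<close>
type_synonym fun4 = "complex \<Rightarrow> complex \<Rightarrow> complex \<Rightarrow> complex \<Rightarrow> complex"

text \<open>Holomorphic in the four variables on U (Osgood: continuous and separately holomorphic).\<close>
definition holo4 :: "fun4 \<Rightarrow> (complex \<times> complex \<times> complex \<times> complex) set \<Rightarrow> bool" where
  "holo4 F U \<longleftrightarrow> open U \<and> continuous_on U (\<lambda>(z,s,w,t). F z s w t) \<and>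
     (\<forall>(z,s,w,t)\<in>U. (\<lambda>x. F x s w t) field_differentiable at z \<and>
                     (\<lambda>x. F z x w t) field_differentiable at s \<and>
                     (\<lambda>x. F z s x t) field_differentiable at w \<and>
                     (\<lambda>x. F z s w x) field_differentiable at t)"

definition dz :: "fun4 \<Rightarrow> fun4" where "dz F = (\<lambda>z s w t. deriv (\<lambda>x. F x s w t) z)"
definition dzeta :: "fun4 \<Rightarrow> fun4" where "dzeta F = (\<lambda>z s w t. deriv (\<lambda>x. F z x w t) s)"
definition dzbar :: "fun4 \<Rightarrow> fun4" where "dzbar F = (\<lambda>z s w t. deriv (\<lambda>x. F z s x t) w)"
definition dzetabar :: "fun4 \<Rightarrow> fun4" where "dzetabar F = (\<lambda>z s w t. deriv (\<lambda>x. F z s w x) t)"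

definition pd :: "nat \<Rightarrow> nat \<Rightarrow> nat \<Rightarrow> nat \<Rightarrow> fun4 \<Rightarrow> fun4" where
  "pd a b c d F = (dz ^^ a) ((dzeta ^^ b) ((dzbar ^^ c) ((dzetabar ^^ d) F)))"

text \<open>Variables of the universal polynomial: VA a c stands for F_{z^a zbar^c},
  VB a b c for F_{z^a zeta^b zbar^c}, VC a c d for F_{z^a zbar^c zetabar^d}.\<close>
datatype dvar = VA nat nat | VB nat nat nat | VC nat nat nat

datatype pexpr = PConst complex | PVar dvar | PAdd pexpr pexpr | PMul pexpr pexpr

fun peval :: "(dvar \<Rightarrow> complex) \<Rightarrow> pexpr \<Rightarrow> complex" where
  "peval v (PConst c) = c"
| "peval v (PVar x) = v x"
| "peval v (PAdd p q) = peval v p + peval v q"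
| "peval v (PMul p q) = peval v p * peval v q"

fun pvars :: "pexpr \<Rightarrow> dvar set" where
  "pvars (PConst c) = {}"
| "pvars (PVar x) = {x}"
| "pvars (PAdd p q) = pvars p \<union> pvars q"
| "pvars (PMul p q) = pvars p \<union> pvars q"

definition allowed_vars :: "nat \<Rightarrow> dvar set" where
  "allowed_vars n = {VA a c | a c. a + c \<le> n} \<union> {VB a b c | a b c. a + b + c \<le> n}
                    \<union> {VC a c d | a c d. a + c + d \<le> n}"

fun jet :: "fun4 \<Rightarrow> complex \<Rightarrow> complex \<Rightarrow> complex \<Rightarrow> complex \<Rightarrow> dvar \<Rightarrow> complex" where
  "jet F z s w t (VA a c) = pd a 0 c 0 F z s w t"
| "jet F z s w t (VB a b c) = pd a b c 0 F z s w t"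
| "jet F z s w t (VC a c d) = pd a 0 c d F z s w t"

end

theory Submission
  imports Defs "HOL-Complex_Analysis.Complex_Analysis"
begin

text \<open>
  Write \<open>F\<^sub>v\<close> for the derivative with multi-index \<open>v = (a,b,c,d)\<close> in \<open>(z, zeta, zbar, zetabar)\<close>,
  and call \<open>v\<close> unmixed if it does not involve both \<open>zeta\<close> and \<open>zetabar\<close>. By induction on \<open>|v|\<close>,
  every \<open>F\<^sub>v\<close> is a polynomial in \<open>1/F_{z zbar}\<close> and the unmixed \<open>F\<^sub>w\<close> with \<open>|w| \<le> |v|\<close>.
  For unmixed \<open>v\<close> there is nothing to show. If \<open>v\<close> involves \<open>z\<close> or \<open>zbar\<close>, then \<open>F\<^sub>v\<close> is the
  \<open>z\<close>- or \<open>zbar\<close>-derivative of a derivative of lower order, and differentiating its expression in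
  \<open>z\<close> or \<open>zbar\<close> keeps all variables unmixed. Otherwise \<open>v = (0,b,0,d)\<close>, and \<open>F\<^sub>v\<close> is obtained by
  differentiating \<open>F_{zeta zetabar} = F_{zeta zbar} F_{z zetabar} / F_{z zbar}\<close>; all derivatives that
  occur involve \<open>z\<close> or \<open>zbar\<close> and have order at most \<open>|v|\<close>, so the previous cases apply.

  The analytic input is that the partial derivatives of a continuous, separately holomorphic
  function are again of this kind and commute. On a bidisc, Cauchy's formula together with
  Fubini's theorem writes the mixed second derivative as a double contour integral that is
  symmetric in the two variables.
\<close>

section \<open>Separately holomorphic functions of two variables\<close>

lemma contour_integral_divide_right:
  "contour_integral g (\<lambda>x. f x / c) = contour_integral g f / c"
proof (cases "f contour_integrable_on g")
  case False
  then show ?thesis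
    by (cases "c = 0") (auto simp: contour_integrable_div_iff not_integrable_contour_integral)
qed (simp add: contour_integral_div)

lemma contour_integral_mult_left:
  "contour_integral g (\<lambda>x. c * f x) = c * contour_integral g f"
proof (cases "f contour_integrable_on g")
  case False
  then show ?thesis
    by (cases "c = 0") (auto simp: contour_integrable_lmul_iff not_integrable_contour_integral)
qed (simp add: contour_integral_lmul)

lemma continuous_on_contour_integral_param:
  assumes cont: "continuous_on (K \<times> path_image \<gamma>) (\<lambda>(p,\<xi>). g p \<xi>)"
    and \<gamma>: "path \<gamma>"
    and \<gamma>': "continuous_on {0..1} (\<lambda>t. vector_derivative \<gamma> (at t))"
  shows "continuous_on K (\<lambda>p. contour_integral \<gamma> (g p))"
proof -
  have "continuous_on (K \<times> {0..1}) (\<lambda>(p,t). g p (\<gamma> t) * vector_derivative \<gamma> (at t))"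
    unfolding case_prod_unfold
  proof (intro continuous_intros)
    have "continuous_on (K \<times> {0..1}) (\<lambda>z. (fst z, \<gamma> (snd z)))"
      by (intro continuous_intros continuous_on_compose2[OF \<gamma>[unfolded path_def]]) auto
    moreover have "(\<lambda>z. (fst z, \<gamma> (snd z))) ` (K \<times> {0..1}) \<subseteq> K \<times> path_image \<gamma>"
      by (auto simp: path_image_def)
    ultimately show "continuous_on (K \<times> {0..1}) (\<lambda>z. g (fst z) (\<gamma> (snd z)))"
      using continuous_on_compose2[OF cont] by fastforce
    show "continuous_on (K \<times> {0..1}) (\<lambda>z. vector_derivative \<gamma> (at (snd z)))"
      by (intro continuous_on_compose2[OF \<gamma>'] continuous_intros) auto
  qed
  then show ?thesis
    unfolding contour_integral_integral
    using integral_continuous_on_param[of K 0 1 "\<lambda>p t. g p (\<gamma> t) * vector_derivative \<gamma> (at t)"]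
    by (simp add: case_prod_unfold)
qed

lemma continuous_on_vector_derivative_circlepath:
  "continuous_on {0..1} (\<lambda>t. vector_derivative (circlepath z r) (at t))"
  unfolding vector_derivative_circlepath by (intro continuous_intros)

lemma continuous_on_contour_integral_circlepath:
  assumes "continuous_on (K \<times> sphere z r) (\<lambda>(p,\<xi>). g p \<xi>)" and "0 \<le> r"
  shows "continuous_on K (\<lambda>p. contour_integral (circlepath z r) (g p))"
  using assms
  by (intro continuous_on_contour_integral_param continuous_on_vector_derivative_circlepath)
     (auto simp: path_image_circlepath_nonneg)

lemma continuous_on_compose_uncurried:
  assumes "continuous_on T (\<lambda>(x,y). f x y)" "continuous_on S a" "continuous_on S b"
    and "\<And>z. z \<in> S \<Longrightarrow> (a z, b z) \<in> T"
  shows "continuous_on S (\<lambda>z. f (a z) (b z))"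
  using continuous_on_compose2[OF assms(1) continuous_on_Pair[OF assms(2,3)]] assms(4) by auto

lemma deriv_eq_contour_integral_circlepath:
  assumes "continuous_on (cball z r) f" "f holomorphic_on ball z r" "w \<in> ball z r"
  shows "deriv f w = contour_integral (circlepath z r) (\<lambda>u. f u / (u - w)^2) / (2 * of_real pi * \<i>)"
  using DERIV_imp_deriv[OF Cauchy_derivative_integral_circlepath(2)[OF assms]] by simp

lemma cball_times_cball_subset_open:
  fixes p :: "'a::metric_space \<times> 'b::metric_space"
  assumes "open V" "p \<in> V"
  obtains r where "r > 0" "cball (fst p) r \<times> cball (snd p) r \<subseteq> V"
proof -
  obtain A B where AB: "open A" "open B" "p \<in> A \<times> B" "A \<times> B \<subseteq> V"
    using open_prod_elim[OF assms] .
  obtain r1 where "r1 > 0" "cball (fst p) r1 \<subseteq> A"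
    using AB open_contains_cball by (metis mem_Times_iff)
  moreover obtain r2 where "r2 > 0" "cball (snd p) r2 \<subseteq> B"
    using AB open_contains_cball by (metis mem_Times_iff)
  ultimately show ?thesis
    using that[of "min r1 r2"] AB(4) by fastforce
qed

lemma holomorphic_on_if_field_differentiable:
  "(\<And>x. x \<in> S \<Longrightarrow> f field_differentiable at x) \<Longrightarrow> f holomorphic_on S"
  by (simp add: field_differentiable_at_within holomorphic_onI)

lemma continuous_on_partial_deriv:
  fixes f :: "complex \<Rightarrow> 'a::metric_space \<Rightarrow> complex"
  assumes V: "open V" and cont: "continuous_on V (\<lambda>(x,q). f x q)"
    and hol: "\<And>x q. (x,q) \<in> V \<Longrightarrow> (\<lambda>x. f x q) field_differentiable at x"
  shows "continuous_on V (\<lambda>(x,q). deriv (\<lambda>x. f x q) x)"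
proof (rule continuous_at_imp_continuous_on, rule ballI)
  fix p assume "p \<in> V"
  then obtain r where r: "r > 0" and rV: "cball (fst p) r \<times> cball (snd p) r \<subseteq> V"
    using V cball_times_cball_subset_open by blast
  define K where "K = ball (fst p) (r/2) \<times> ball (snd p) r"
  define h where "h = (\<lambda>(x,q). contour_integral (circlepath (fst p) r) (\<lambda>\<xi>. f \<xi> q / (\<xi> - x)^2)
    / (2 * of_real pi * \<i>))"
  have "continuous_on (K \<times> sphere (fst p) r) (\<lambda>z. f (snd z) (snd (fst z)))"
    by (rule continuous_on_compose_uncurried[OF cont]) (use rV in \<open>auto intro!: continuous_intros simp: K_def\<close>)
  moreover have "(snd z - fst (fst z))^2 \<noteq> 0" if "z \<in> K \<times> sphere (fst p) r" for z
    using that r by (auto simp: K_def dist_commute)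
  ultimately have "continuous_on (K \<times> sphere (fst p) r) (\<lambda>(q,\<xi>). f \<xi> (snd q) / (\<xi> - fst q)^2)"
    unfolding case_prod_unfold by (intro continuous_intros) auto
  then have "continuous_on K h"
    unfolding h_def case_prod_unfold
    by (intro continuous_intros continuous_on_contour_integral_circlepath)
       (use r in \<open>auto simp: case_prod_unfold\<close>)
  moreover have "deriv (\<lambda>x. f x q) x = h (x,q)" if "(x,q) \<in> K" for x q
  proof (unfold h_def, simp, rule deriv_eq_contour_integral_circlepath)
    show "continuous_on (cball (fst p) r) (\<lambda>x. f x q)"
      by (rule continuous_on_compose_uncurried[OF cont]) (use that rV in \<open>auto intro!: continuous_intros simp: K_def\<close>)
    show "(\<lambda>x. f x q) holomorphic_on ball (fst p) r"
      using that rV by (intro holomorphic_on_if_field_differentiable hol) (auto simp: K_def)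
    show "x \<in> ball (fst p) r" using that r by (auto simp: K_def)
  qed
  ultimately have "continuous_on K (\<lambda>(x,q). deriv (\<lambda>x. f x q) x)"
    by (elim continuous_on_eq) auto
  moreover have "open K" "p \<in> K" using r by (auto simp: K_def open_Times mem_Times_iff)
  ultimately show "isCont (\<lambda>(x,q). deriv (\<lambda>x. f x q) x) p"
    using continuous_on_eq_continuous_at by blast
qed

lemma contour_integral_swap_circlepath:
  assumes rs: "0 \<le> r" "0 \<le> s"
    and f: "continuous_on (sphere x0 r \<times> sphere y0 s) (\<lambda>(\<xi>,\<eta>). f \<xi> \<eta>)"
    and u: "continuous_on (sphere x0 r) u" "\<And>\<xi>. \<xi> \<in> sphere x0 r \<Longrightarrow> u \<xi> \<noteq> 0"
    and v: "continuous_on (sphere y0 s) v" "\<And>\<eta>. \<eta> \<in> sphere y0 s \<Longrightarrow> v \<eta> \<noteq> 0"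
  shows "contour_integral (circlepath y0 s) (\<lambda>\<eta>. contour_integral (circlepath x0 r) (\<lambda>\<xi>. f \<xi> \<eta> / u \<xi>) / v \<eta>)
       = contour_integral (circlepath x0 r) (\<lambda>\<xi>. contour_integral (circlepath y0 s) (\<lambda>\<eta>. f \<xi> \<eta> / v \<eta>) / u \<xi>)"
proof -
  have "continuous_on (sphere x0 r \<times> sphere y0 s) (\<lambda>z. f (fst z) (snd z) / u (fst z) / v (snd z))"
    using f u v
    by (intro continuous_intros continuous_on_compose2[OF u(1)] continuous_on_compose2[OF v(1)])
       (auto simp: case_prod_unfold mem_Times_iff)
  then have swap: "contour_integral (circlepath x0 r) (\<lambda>\<xi>. contour_integral (circlepath y0 s) (\<lambda>\<eta>. f \<xi> \<eta> / u \<xi> / v \<eta>))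
      = contour_integral (circlepath y0 s) (\<lambda>\<eta>. contour_integral (circlepath x0 r) (\<lambda>\<xi>. f \<xi> \<eta> / u \<xi> / v \<eta>))"
    using rs
    by (intro contour_integral_swap continuous_on_vector_derivative_circlepath)
       (auto simp: path_image_circlepath_nonneg case_prod_unfold)
  have "contour_integral (circlepath y0 s) (\<lambda>\<eta>. f \<xi> \<eta> / u \<xi> / v \<eta>)
      = contour_integral (circlepath y0 s) (\<lambda>\<eta>. f \<xi> \<eta> / v \<eta>) / u \<xi>" for \<xi>
    using contour_integral_divide_right[of _ "\<lambda>\<eta>. f \<xi> \<eta> / v \<eta>" "u \<xi>"]
    by (simp add: divide_divide_eq_left mult.commute)
  then show ?thesis
    using swap by (simp only: contour_integral_divide_right)
qed

lemma contour_integral_partial_deriv_bidisc: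
  fixes f :: "complex \<Rightarrow> complex \<Rightarrow> complex"
  assumes r: "0 < r"
    and cont: "continuous_on (cball x0 r \<times> cball y0 r) (\<lambda>(x,y). f x y)"
    and hx: "\<And>y. y \<in> cball y0 r \<Longrightarrow> (\<lambda>x. f x y) holomorphic_on ball x0 r"
    and hy: "\<And>x. x \<in> cball x0 r \<Longrightarrow> (\<lambda>y. f x y) holomorphic_on ball y0 r"
    and y: "y \<in> ball y0 r"
  shows "contour_integral (circlepath y0 r)
           (\<lambda>\<eta>. contour_integral (circlepath x0 r) (\<lambda>\<xi>. f \<xi> \<eta> / (\<xi> - x0)^2) / (\<eta> - y))
         = (2 * of_real pi * \<i>)^2 * deriv (\<lambda>x. f x y) x0"
proof -
  let ?c = "2 * of_real pi * \<i> :: complex"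
  have "contour_integral (circlepath y0 r)
          (\<lambda>\<eta>. contour_integral (circlepath x0 r) (\<lambda>\<xi>. f \<xi> \<eta> / (\<xi> - x0)^2) / (\<eta> - y))
      = contour_integral (circlepath x0 r)
          (\<lambda>\<xi>. contour_integral (circlepath y0 r) (\<lambda>\<eta>. f \<xi> \<eta> / (\<eta> - y)) / (\<xi> - x0)^2)"
    using r y
    by (intro contour_integral_swap_circlepath continuous_on_subset[OF cont] continuous_intros) auto
  also have "\<dots> = contour_integral (circlepath x0 r) (\<lambda>\<xi>. ?c * (f \<xi> y / (\<xi> - x0)^2))"
  proof (rule contour_integral_eq)
    fix \<xi> assume "\<xi> \<in> path_image (circlepath x0 r)"
    then have \<xi>: "\<xi> \<in> cball x0 r" using r by auto
    have "((\<lambda>\<eta>. f \<xi> \<eta> / (\<eta> - y)) has_contour_integral ?c * f \<xi> y) (circlepath y0 r)"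
      by (rule Cauchy_integral_circlepath, rule continuous_on_compose_uncurried[OF cont])
         (use \<xi> y hy in \<open>auto intro!: continuous_intros simp: dist_norm norm_minus_commute\<close>)
    then show "contour_integral (circlepath y0 r) (\<lambda>\<eta>. f \<xi> \<eta> / (\<eta> - y)) / (\<xi> - x0)^2
        = ?c * (f \<xi> y / (\<xi> - x0)^2)"
      by (simp add: contour_integral_unique)
  qed
  also have "\<dots> = ?c^2 * deriv (\<lambda>x. f x y) x0"
  proof -
    have "deriv (\<lambda>x. f x y) x0 = contour_integral (circlepath x0 r) (\<lambda>\<xi>. f \<xi> y / (\<xi> - x0)^2) / ?c"
      by (rule deriv_eq_contour_integral_circlepath, rule continuous_on_compose_uncurried[OF cont])
         (use y r hx in \<open>auto intro!: continuous_intros\<close>)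
    then show ?thesis
      unfolding contour_integral_mult_left by (simp add: power2_eq_square)
  qed
  finally show ?thesis .
qed

text \<open>The function \<open>B\<close> below is \<open>2\<pi>i\<close> times the \<open>x\<close>-derivative at \<open>x0\<close>; by the previous lemma
  it reproduces itself under Cauchy's integral, hence is holomorphic, and Cauchy's formula for its
  derivative yields a double integral.\<close>

lemma has_field_derivative_partial_deriv_bidisc:
  fixes f :: "complex \<Rightarrow> complex \<Rightarrow> complex"
  assumes r: "0 < r"
    and cont: "continuous_on (cball x0 r \<times> cball y0 r) (\<lambda>(x,y). f x y)"
    and hx: "\<And>y. y \<in> cball y0 r \<Longrightarrow> (\<lambda>x. f x y) holomorphic_on ball x0 r"
    and hy: "\<And>x. x \<in> cball x0 r \<Longrightarrow> (\<lambda>y. f x y) holomorphic_on ball y0 r"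
  shows "((\<lambda>y. deriv (\<lambda>x. f x y) x0) has_field_derivative
     contour_integral (circlepath y0 r) (\<lambda>\<eta>. contour_integral (circlepath x0 r)
       (\<lambda>\<xi>. f \<xi> \<eta> / (\<xi> - x0)^2) / (\<eta> - y0)^2) / (2 * of_real pi * \<i>)^2) (at y0)"
proof -
  let ?c = "2 * of_real pi * \<i> :: complex"
  define B where "B = (\<lambda>\<eta>. contour_integral (circlepath x0 r) (\<lambda>\<xi>. f \<xi> \<eta> / (\<xi> - x0)^2))"
  have "continuous_on (cball y0 r \<times> sphere x0 r) (\<lambda>(\<eta>,\<xi>). f \<xi> \<eta> / (\<xi> - x0)^2)"
    unfolding case_prod_unfold using r
    by (intro continuous_intros continuous_on_compose_uncurried[OF cont]) auto
  then have B_cont: "continuous_on (cball y0 r) B"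
    unfolding B_def using r by (intro continuous_on_contour_integral_circlepath) auto
  have "((\<lambda>\<eta>. B \<eta> / (\<eta> - y)^1) has_contour_integral ?c^2 * deriv (\<lambda>x. f x y) x0) (circlepath y0 r)"
    if y: "y \<in> ball y0 r" for y
  proof -
    have "continuous_on (sphere y0 r) (\<lambda>\<eta>. B \<eta> / (\<eta> - y))"
      using y by (intro continuous_intros continuous_on_subset[OF B_cont]) auto
    then have "(\<lambda>\<eta>. B \<eta> / (\<eta> - y)) contour_integrable_on circlepath y0 r"
      using r by (intro contour_integrable_continuous_circlepath) auto
    from has_contour_integral_integral[OF this] show ?thesis
      using contour_integral_partial_deriv_bidisc[OF r cont hx hy y] by (simp add: B_def)
  qed
  from Cauchy_next_derivative_circlepath(2)[OF _ this, where w=y0]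
  have "((\<lambda>y. ?c^2 * deriv (\<lambda>x. f x y) x0) has_field_derivative
      contour_integral (circlepath y0 r) (\<lambda>\<eta>. B \<eta> / (\<eta> - y0)^2)) (at y0)"
    using r by (simp add: numeral_2_eq_2 continuous_on_subset[OF B_cont])
  from DERIV_cdivide[OF this, of "?c^2"] show ?thesis
    by (simp add: B_def)
qed

lemma has_field_derivative_mixed_partials:
  fixes f :: "complex \<Rightarrow> complex \<Rightarrow> complex"
  assumes V: "open V" and cont: "continuous_on V (\<lambda>(x,y). f x y)"
    and dx: "\<And>x y. (x,y) \<in> V \<Longrightarrow> (\<lambda>x. f x y) field_differentiable at x"
    and dy: "\<And>x y. (x,y) \<in> V \<Longrightarrow> (\<lambda>y. f x y) field_differentiable at y"
    and p: "(x0,y0) \<in> V"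
  shows "((\<lambda>y. deriv (\<lambda>x. f x y) x0) has_field_derivative deriv (\<lambda>x. deriv (\<lambda>y. f x y) y0) x0) (at y0)"
proof -
  obtain r where r: "r > 0" and rV: "cball x0 r \<times> cball y0 r \<subseteq> V"
    using cball_times_cball_subset_open[OF V p] by auto
  have cont_xy: "continuous_on (cball x0 r \<times> cball y0 r) (\<lambda>(x,y). f x y)"
    by (rule continuous_on_subset[OF cont rV])
  have "continuous_on (cball y0 r \<times> cball x0 r) (\<lambda>z. f (snd z) (fst z))"
    by (rule continuous_on_compose_uncurried[OF cont_xy]) (auto intro!: continuous_intros)
  then have cont_yx: "continuous_on (cball y0 r \<times> cball x0 r) (\<lambda>(y,x). f x y)"
    by (simp add: case_prod_unfold)
  have hx: "(\<lambda>x. f x y) holomorphic_on ball x0 r" if "y \<in> cball y0 r" for y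
    using that rV by (intro holomorphic_on_if_field_differentiable dx) auto
  have hy: "(\<lambda>y. f x y) holomorphic_on ball y0 r" if "x \<in> cball x0 r" for x
    using that rV by (intro holomorphic_on_if_field_differentiable dy) auto
  have "contour_integral (circlepath y0 r) (\<lambda>\<eta>. contour_integral (circlepath x0 r)
          (\<lambda>\<xi>. f \<xi> \<eta> / (\<xi> - x0)^2) / (\<eta> - y0)^2)
      = contour_integral (circlepath x0 r) (\<lambda>\<xi>. contour_integral (circlepath y0 r)
          (\<lambda>\<eta>. f \<xi> \<eta> / (\<eta> - y0)^2) / (\<xi> - x0)^2)"
    using r by (intro contour_integral_swap_circlepath continuous_on_subset[OF cont_xy] continuous_intros) auto
  with has_field_derivative_partial_deriv_bidisc[OF r cont_xy hx hy]
    DERIV_imp_deriv[OF has_field_derivative_partial_deriv_bidisc[OF r cont_yx hy hx]]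
  show ?thesis by simp
qed

section \<open>Partial derivatives in four variables\<close>

text \<open>Coordinates \<open>0, 1, 2, 3\<close> are \<open>z, zeta, zbar, zetabar\<close>.\<close>

type_synonym cvec4 = "complex \<times> complex \<times> complex \<times> complex"

definition coord :: "nat \<Rightarrow> cvec4 \<Rightarrow> complex" where
  "coord k p = (case p of (z,s,w,t) \<Rightarrow> if k = 0 then z else if k = 1 then s else if k = 2 then w else t)"

definition coord_upd :: "nat \<Rightarrow> cvec4 \<Rightarrow> complex \<Rightarrow> cvec4" where
  "coord_upd k p x = (case p of (z,s,w,t) \<Rightarrow>
     if k = 0 then (x,s,w,t) else if k = 1 then (z,x,w,t) else if k = 2 then (z,s,x,t) else (z,s,w,x))"

lemma coord_coord_upd [simp]: "coord k (coord_upd k p x) = x"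
  by (cases p) (auto simp: coord_def coord_upd_def)

lemma coord_coord_upd_other: "j \<noteq> k \<Longrightarrow> j < 4 \<Longrightarrow> k < 4 \<Longrightarrow> coord j (coord_upd k p x) = coord j p"
  by (cases p) (auto simp: coord_def coord_upd_def)

lemma coord_upd_coord [simp]: "coord_upd k p (coord k p) = p"
  by (cases p) (auto simp: coord_def coord_upd_def)

lemma coord_upd_coord_upd [simp]: "coord_upd k (coord_upd k p x) y = coord_upd k p y"
  by (cases p) (auto simp: coord_upd_def)

lemma coord_upd_commute:
  "j \<noteq> k \<Longrightarrow> j < 4 \<Longrightarrow> k < 4 \<Longrightarrow> coord_upd j (coord_upd k p y) x = coord_upd k (coord_upd j p x) y"
  by (cases p) (auto simp: coord_upd_def)

lemma continuous_on_coord [continuous_intros]: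
  "continuous_on S a \<Longrightarrow> continuous_on S (\<lambda>z. coord k (a z))"
  unfolding coord_def case_prod_unfold
  by (cases "k = 0"; cases "k = 1"; cases "k = 2") (auto intro!: continuous_intros)

lemma continuous_on_coord_upd [continuous_intros]:
  "continuous_on S a \<Longrightarrow> continuous_on S b \<Longrightarrow> continuous_on S (\<lambda>z. coord_upd k (a z) (b z))"
  unfolding coord_upd_def case_prod_unfold
  by (cases "k = 0"; cases "k = 1"; cases "k = 2") (auto intro!: continuous_intros)

lemma open_coord_slice:
  assumes "open U" shows "open {x. coord_upd k p x \<in> U}"
proof -
  have "continuous_on UNIV (\<lambda>x. coord_upd k p x)" by (intro continuous_intros)
  then show ?thesis using open_vimage[OF assms] by (simp add: vimage_def)
qed

definition partial :: "nat \<Rightarrow> (cvec4 \<Rightarrow> complex) \<Rightarrow> cvec4 \<Rightarrow> complex" where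
  "partial k g p = deriv (\<lambda>x. g (coord_upd k p x)) (coord k p)"

definition holomorphic4_on :: "(cvec4 \<Rightarrow> complex) \<Rightarrow> cvec4 set \<Rightarrow> bool" where
  "holomorphic4_on g U \<longleftrightarrow> open U \<and> continuous_on U g \<and>
     (\<forall>k<4. \<forall>p\<in>U. (\<lambda>x. g (coord_upd k p x)) field_differentiable at (coord k p))"

lemma holomorphic4_on_field_differentiable:
  assumes "holomorphic4_on g U" "k < 4" "coord_upd k p x \<in> U"
  shows "(\<lambda>y. g (coord_upd k p y)) field_differentiable at x"
proof -
  have "(\<lambda>y. g (coord_upd k (coord_upd k p x) y)) field_differentiable at (coord k (coord_upd k p x))"
    using assms unfolding holomorphic4_on_def by blast
  then show ?thesis by simp
qed

lemma holomorphic4_on_slice: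
  "holomorphic4_on g U \<Longrightarrow> k < 4 \<Longrightarrow> (\<lambda>x. g (coord_upd k p x)) holomorphic_on {x. coord_upd k p x \<in> U}"
  by (intro holomorphic_on_if_field_differentiable holomorphic4_on_field_differentiable) auto

lemma holomorphic4_on_vimage:
  assumes "holomorphic4_on g U" and "continuous_on UNIV \<phi>"
  shows "open (\<phi> -` U)" and "continuous_on (\<phi> -` U) (\<lambda>z. g (\<phi> z))"
proof -
  show "open (\<phi> -` U)"
    using assms by (intro open_vimage) (auto simp: holomorphic4_on_def)
  show "continuous_on (\<phi> -` U) (\<lambda>z. g (\<phi> z))"
  proof (rule continuous_on_compose2[of U g])
    show "continuous_on U g" using assms(1) by (simp add: holomorphic4_on_def)
    show "continuous_on (\<phi> -` U) \<phi>" using assms(2) by (rule continuous_on_subset) simp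
  qed auto
qed

lemma continuous_on_partial:
  assumes g: "holomorphic4_on g U" and k: "k < 4"
  shows "continuous_on U (partial k g)"
proof -
  define V where "V = (\<lambda>(x,q). coord_upd k q x) -` U"
  have "continuous_on UNIV (\<lambda>(x,q). coord_upd k q x)"
    unfolding case_prod_unfold by (intro continuous_intros)
  from holomorphic4_on_vimage[OF g this] have "open V" "continuous_on V (\<lambda>(x,q). g (coord_upd k q x))"
    by (simp_all add: V_def case_prod_unfold)
  moreover have "(\<lambda>x. g (coord_upd k q x)) field_differentiable at x" if "(x,q) \<in> V" for x q
    using that by (intro holomorphic4_on_field_differentiable[OF g k]) (simp add: V_def)
  ultimately have "continuous_on V (\<lambda>(x,q). deriv (\<lambda>x. g (coord_upd k q x)) x)"
    by (rule continuous_on_partial_deriv)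
  moreover have "continuous_on U (\<lambda>p. (coord k p, p))"
    by (intro continuous_intros)
  moreover have "(\<lambda>p. (coord k p, p)) ` U \<subseteq> V"
    by (auto simp: V_def)
  ultimately have "continuous_on U (\<lambda>p. (\<lambda>(x,q). deriv (\<lambda>x. g (coord_upd k q x)) x) (coord k p, p))"
    by (rule continuous_on_compose2)
  moreover have "partial k g = (\<lambda>p. (\<lambda>(x,q). deriv (\<lambda>x. g (coord_upd k q x)) x) (coord k p, p))"
    by (simp add: fun_eq_iff partial_def)
  ultimately show ?thesis
    by simp
qed

lemma has_field_derivative_partial:
  assumes g: "holomorphic4_on g U" and jk: "j < 4" "k < 4" "j \<noteq> k" and p: "p \<in> U"
  shows "((\<lambda>y. partial k g (coord_upd j p y)) has_field_derivative partial k (partial j g) p)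
           (at (coord j p))"
proof -
  define f where "f = (\<lambda>x y. g (coord_upd k (coord_upd j p y) x))"
  define V where "V = (\<lambda>(x,y). coord_upd k (coord_upd j p y) x) -` U"
  have swap: "coord_upd k (coord_upd j p y) x = coord_upd j (coord_upd k p x) y" for x y
    by (rule coord_upd_commute) (use jk in auto)
  have "continuous_on UNIV (\<lambda>(x,y). coord_upd k (coord_upd j p y) x)"
    unfolding case_prod_unfold by (intro continuous_intros)
  from holomorphic4_on_vimage[OF g this] have "open V" "continuous_on V (\<lambda>(x,y). f x y)"
    by (simp_all add: V_def f_def case_prod_unfold)
  moreover have "(\<lambda>x. f x y) field_differentiable at x" if "(x,y) \<in> V" for x y
    using that unfolding f_def by (intro holomorphic4_on_field_differentiable[OF g jk(2)]) (simp add: V_def)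
  moreover have "(\<lambda>y. f x y) field_differentiable at y" if "(x,y) \<in> V" for x y
    using that unfolding f_def swap
    by (intro holomorphic4_on_field_differentiable[OF g jk(1)]) (simp add: V_def swap)
  moreover have "(coord k p, coord j p) \<in> V"
    using p by (simp add: V_def)
  ultimately have "((\<lambda>y. deriv (\<lambda>x. f x y) (coord k p)) has_field_derivative
      deriv (\<lambda>x. deriv (\<lambda>y. f x y) (coord j p)) (coord k p)) (at (coord j p))"
    by (rule has_field_derivative_mixed_partials)
  moreover have "partial k g (coord_upd j p y) = deriv (\<lambda>x. f x y) (coord k p)" for y
    using jk by (simp add: partial_def f_def coord_coord_upd_other)
  moreover have "partial j g (coord_upd k p x) = deriv (\<lambda>y. f x y) (coord j p)" for x
    using jk by (simp add: partial_def f_def swap coord_coord_upd_other)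
  ultimately show ?thesis
    by (simp add: partial_def)
qed

lemma holomorphic4_on_partial:
  assumes g: "holomorphic4_on g U" and k: "k < 4"
  shows "holomorphic4_on (partial k g) U"
  unfolding holomorphic4_on_def
proof (intro conjI allI impI ballI)
  show "open U" using g by (simp add: holomorphic4_on_def)
  show "continuous_on U (partial k g)" by (rule continuous_on_partial[OF g k])
  fix j :: nat and p assume j: "j < 4" and p: "p \<in> U"
  show "(\<lambda>x. partial k g (coord_upd j p x)) field_differentiable at (coord j p)"
  proof (cases "j = k")
    case True
    have "open {x. coord_upd k p x \<in> U}"
      using g by (simp add: holomorphic4_on_def open_coord_slice)
    then have "deriv (\<lambda>x. g (coord_upd k p x)) holomorphic_on {x. coord_upd k p x \<in> U}"
      by (intro holomorphic_deriv holomorphic4_on_slice[OF g k])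
    then have "deriv (\<lambda>x. g (coord_upd k p x)) field_differentiable at (coord k p)"
      by (rule holomorphic_on_imp_differentiable_at[OF _ \<open>open {x. coord_upd k p x \<in> U}\<close>]) (simp add: p)
    then show ?thesis
      by (simp add: True partial_def)
  next
    case False
    then show ?thesis
      using has_field_derivative_partial[OF g j k False p] field_differentiable_def by blast
  qed
qed

lemma partial_commute:
  assumes "holomorphic4_on g U" "j < 4" "k < 4" "p \<in> U"
  shows "partial j (partial k g) p = partial k (partial j g) p"
proof (cases "j = k")
  case False
  then show ?thesis
    using DERIV_imp_deriv[OF has_field_derivative_partial[OF assms(1-3) False assms(4)]]
    by (simp add: partial_def)
qed simp

lemma partial_cong:
  assumes "open U" "\<And>q. q \<in> U \<Longrightarrow> g1 q = g2 q" "p \<in> U"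
  shows "partial k g1 p = partial k g2 p"
  unfolding partial_def
proof (rule deriv_cong_ev[OF _ refl])
  show "\<forall>\<^sub>F x in nhds (coord k p). g1 (coord_upd k p x) = g2 (coord_upd k p x)"
    unfolding eventually_nhds
    using open_coord_slice[OF assms(1)] assms(2,3) by (intro exI[of _ "{x. coord_upd k p x \<in> U}"]) auto
qed

type_synonym mindex = "nat \<times> nat \<times> nat \<times> nat"

fun mixed_partial :: "mindex \<Rightarrow> (cvec4 \<Rightarrow> complex) \<Rightarrow> cvec4 \<Rightarrow> complex" where
  "mixed_partial (a,b,c,d) g = (partial 0 ^^ a) ((partial 1 ^^ b) ((partial 2 ^^ c) ((partial 3 ^^ d) g)))"

fun mi_succ :: "nat \<Rightarrow> mindex \<Rightarrow> mindex" where
  "mi_succ k (a,b,c,d) =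
     (if k = 0 then (Suc a,b,c,d) else if k = 1 then (a,Suc b,c,d) else if k = 2 then (a,b,Suc c,d) else (a,b,c,Suc d))"

fun mi_order :: "mindex \<Rightarrow> nat" where
  "mi_order (a,b,c,d) = a + b + c + d"

lemma mi_order_mi_succ [simp]: "mi_order (mi_succ k v) = Suc (mi_order v)"
  by (cases v) auto

lemma holomorphic4_on_funpow_partial:
  "holomorphic4_on g U \<Longrightarrow> k < 4 \<Longrightarrow> holomorphic4_on ((partial k ^^ n) g) U"
  by (induction n) (simp_all add: holomorphic4_on_partial)

lemma holomorphic4_on_mixed_partial:
  "holomorphic4_on g U \<Longrightarrow> holomorphic4_on (mixed_partial v g) U"
  by (cases v) (simp add: holomorphic4_on_funpow_partial)

lemma funpow_partial_cong:
  assumes "open U" "\<And>q. q \<in> U \<Longrightarrow> g1 q = g2 q" "p \<in> U"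
  shows "(partial k ^^ n) g1 p = (partial k ^^ n) g2 p"
  using assms(3)
proof (induction n arbitrary: p)
  case (Suc n)
  then show ?case using partial_cong[OF assms(1) Suc.IH Suc.prems] by simp
qed (simp add: assms(2))

lemma partial_funpow_commute:
  assumes h: "holomorphic4_on h U" and ij: "i < 4" "j < 4" and p: "p \<in> U"
  shows "partial j ((partial i ^^ n) h) p = (partial i ^^ n) (partial j h) p"
  using p
proof (induction n arbitrary: p)
  case (Suc n)
  have "partial j (partial i ((partial i ^^ n) h)) p = partial i (partial j ((partial i ^^ n) h)) p"
    by (rule partial_commute[OF holomorphic4_on_funpow_partial[OF h ij(1)] ij(2,1) Suc.prems])
  also have "\<dots> = partial i ((partial i ^^ n) (partial j h)) p"
    by (rule partial_cong[OF _ Suc.IH Suc.prems]) (use h in \<open>simp add: holomorphic4_on_def\<close>)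
  finally show ?case by simp
qed simp

lemma partial_mixed_partial:
  assumes g: "holomorphic4_on g U" and k: "k < 4" and p: "p \<in> U"
  shows "partial k (mixed_partial v g) p = mixed_partial (mi_succ k v) g p"
proof -
  obtain a b c d where v: "v = (a,b,c,d)" by (cases v)
  have U: "open U" using g by (simp add: holomorphic4_on_def)
  let ?Z = "(partial 3 ^^ d) g" let ?Y = "(partial 2 ^^ c) ?Z" let ?X = "(partial 1 ^^ b) ?Y"
  have hZ: "holomorphic4_on ?Z U" and hY: "holomorphic4_on ?Y U" and hX: "holomorphic4_on ?X U"
    using g by (simp_all add: holomorphic4_on_funpow_partial)
  consider "k = 0" | "k = 1" | "k = 2" | "k = 3" using k by linarith
  then show ?thesis
  proof cases
    case 1
    then show ?thesis by (simp add: v)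
  next
    case 2
    have "partial 1 ((partial 0 ^^ a) ?X) p = (partial 0 ^^ a) (partial 1 ?X) p"
      by (rule partial_funpow_commute[OF hX _ _ p]) simp_all
    then show ?thesis by (simp add: v 2)
  next
    case 3
    have "partial 2 ((partial 0 ^^ a) ?X) p = (partial 0 ^^ a) (partial 2 ?X) p"
      by (rule partial_funpow_commute[OF hX _ _ p]) simp_all
    also have "\<dots> = (partial 0 ^^ a) ((partial 1 ^^ b) (partial 2 ?Y)) p"
      by (rule funpow_partial_cong[OF U _ p], rule partial_funpow_commute[OF hY]) simp_all
    finally show ?thesis by (simp add: v 3)
  next
    case 4
    have "partial 3 ((partial 0 ^^ a) ?X) p = (partial 0 ^^ a) (partial 3 ?X) p"
      by (rule partial_funpow_commute[OF hX _ _ p]) simp_all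
    also have "\<dots> = (partial 0 ^^ a) ((partial 1 ^^ b) (partial 3 ?Y)) p"
      by (rule funpow_partial_cong[OF U _ p], rule partial_funpow_commute[OF hY]) simp_all
    also have "\<dots> = (partial 0 ^^ a) ((partial 1 ^^ b) ((partial 2 ^^ c) (partial 3 ?Z))) p"
      by (rule funpow_partial_cong[OF U _ p], rule funpow_partial_cong[OF U],
          rule partial_funpow_commute[OF hZ]) simp_all
    finally show ?thesis by (simp add: v 4)
  qed
qed

lemma has_field_derivative_mixed_partial_coord:
  assumes g: "holomorphic4_on g U" and k: "k < 4" and p: "p \<in> U"
  shows "((\<lambda>x. mixed_partial v g (coord_upd k p x)) has_field_derivative mixed_partial (mi_succ k v) g p)
           (at (coord k p))"
proof -
  have "(\<lambda>x. mixed_partial v g (coord_upd k p x)) field_differentiable at (coord k p)"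
    using holomorphic4_on_mixed_partial[OF g] k p by (simp add: holomorphic4_on_def)
  then have "((\<lambda>x. mixed_partial v g (coord_upd k p x)) has_field_derivative
      deriv (\<lambda>x. mixed_partial v g (coord_upd k p x)) (coord k p)) (at (coord k p))"
    by (simp add: DERIV_deriv_iff_field_differentiable)
  with partial_mixed_partial[OF g k p, of v] show ?thesis
    by (simp add: partial_def)
qed

section \<open>Rational expressions in the jet\<close>

text \<open>\<open>JInv\<close> stands for \<open>1/F_{z zbar}\<close>, the inverse of the variable \<open>(1,0,1,0)\<close>.\<close>

datatype jexpr = JConst complex | JVar mindex | JInv | JAdd jexpr jexpr | JMul jexpr jexpr

fun jeval :: "(mindex \<Rightarrow> complex) \<Rightarrow> jexpr \<Rightarrow> complex" where
  "jeval val (JConst c) = c"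
| "jeval val (JVar v) = val v"
| "jeval val JInv = inverse (val (1,0,1,0))"
| "jeval val (JAdd e1 e2) = jeval val e1 + jeval val e2"
| "jeval val (JMul e1 e2) = jeval val e1 * jeval val e2"

fun jvars :: "jexpr \<Rightarrow> mindex set" where
  "jvars (JConst c) = {}"
| "jvars (JVar v) = {v}"
| "jvars JInv = {(1,0,1,0)}"
| "jvars (JAdd e1 e2) = jvars e1 \<union> jvars e2"
| "jvars (JMul e1 e2) = jvars e1 \<union> jvars e2"

fun jderiv :: "nat \<Rightarrow> jexpr \<Rightarrow> jexpr" where
  "jderiv k (JConst c) = JConst 0"
| "jderiv k (JVar v) = JVar (mi_succ k v)"
| "jderiv k JInv = JMul (JConst (-1)) (JMul (JVar (mi_succ k (1,0,1,0))) (JMul JInv JInv))"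
| "jderiv k (JAdd e1 e2) = JAdd (jderiv k e1) (jderiv k e2)"
| "jderiv k (JMul e1 e2) = JAdd (JMul (jderiv k e1) e2) (JMul e1 (jderiv k e2))"

fun jsubst :: "(mindex \<Rightarrow> jexpr) \<Rightarrow> jexpr \<Rightarrow> jexpr" where
  "jsubst \<sigma> (JConst c) = JConst c"
| "jsubst \<sigma> (JVar v) = \<sigma> v"
| "jsubst \<sigma> JInv = JInv"
| "jsubst \<sigma> (JAdd e1 e2) = JAdd (jsubst \<sigma> e1) (jsubst \<sigma> e2)"
| "jsubst \<sigma> (JMul e1 e2) = JMul (jsubst \<sigma> e1) (jsubst \<sigma> e2)"

lemma jvars_jderiv: "jvars (jderiv k e) \<subseteq> jvars e \<union> mi_succ k ` jvars e"
  by (induction e) auto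

lemma jvars_funpow_jderiv:
  assumes "jvars e \<subseteq> {w. mi_order w \<le> m \<and> Q w}" and "\<And>w. Q w \<Longrightarrow> Q (mi_succ k w)"
  shows "jvars ((jderiv k ^^ n) e) \<subseteq> {w. mi_order w \<le> m + n \<and> Q w}"
proof (induction n)
  case (Suc n)
  have "jvars (jderiv k ((jderiv k ^^ n) e))
      \<subseteq> jvars ((jderiv k ^^ n) e) \<union> mi_succ k ` jvars ((jderiv k ^^ n) e)"
    by (rule jvars_jderiv)
  also have "\<dots> \<subseteq> {w. mi_order w \<le> m + Suc n \<and> Q w}"
    using Suc.IH assms(2) by auto
  finally show ?case by simp
qed (use assms(1) in simp)

lemma jvars_jsubst: "jvars (jsubst \<sigma> e) \<subseteq> (\<Union>w\<in>jvars e. jvars (\<sigma> w)) \<union> {(1,0,1,0)}"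
  by (induction e) auto

lemma jeval_jsubst:
  "(\<And>w. w \<in> jvars e \<Longrightarrow> jeval val (\<sigma> w) = val w) \<Longrightarrow> jeval val (jsubst \<sigma> e) = jeval val e"
  by (induction e) auto

definition jet4 :: "(cvec4 \<Rightarrow> complex) \<Rightarrow> cvec4 \<Rightarrow> mindex \<Rightarrow> complex" where
  "jet4 g p v = mixed_partial v g p"

lemma has_field_derivative_jeval:
  assumes g: "holomorphic4_on g U" and nz: "\<And>q. q \<in> U \<Longrightarrow> mixed_partial (1,0,1,0) g q \<noteq> 0"
    and k: "k < 4" and p: "p \<in> U"
  shows "((\<lambda>x. jeval (jet4 g (coord_upd k p x)) e) has_field_derivative jeval (jet4 g p) (jderiv k e))
           (at (coord k p))"
proof (induction e)
  case (JVar v)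
  show ?case
    using has_field_derivative_mixed_partial_coord[OF g k p] by (simp add: jet4_def)
next
  case JInv
  have "mixed_partial (1,0,1,0) g (coord_upd k p (coord k p)) \<noteq> 0"
    using nz[OF p] by simp
  from DERIV_inverse_fun[OF has_field_derivative_mixed_partial_coord[OF g k p] this]
  show ?case
    by (simp add: jet4_def power2_eq_square inverse_mult_distrib)
next
  case (JAdd e1 e2)
  then show ?case by (simp add: DERIV_add)
next
  case (JMul e1 e2)
  from DERIV_mult[OF JMul.IH] show ?case by (simp add: ac_simps)
qed simp

lemma partial_jeval:
  assumes "holomorphic4_on g U" "\<And>q. q \<in> U \<Longrightarrow> mixed_partial (1,0,1,0) g q \<noteq> 0" "k < 4" "p \<in> U"
  shows "partial k (\<lambda>q. jeval (jet4 g q) e) p = jeval (jet4 g p) (jderiv k e)"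
  unfolding partial_def by (rule DERIV_imp_deriv[OF has_field_derivative_jeval[OF assms]])

definition levi_rank_one :: "cvec4 set \<Rightarrow> (cvec4 \<Rightarrow> complex) \<Rightarrow> bool" where
  "levi_rank_one U g \<longleftrightarrow> holomorphic4_on g U \<and> (\<forall>q\<in>U. mixed_partial (1,0,1,0) g q \<noteq> 0) \<and>
     (\<forall>q\<in>U. mixed_partial (1,0,1,0) g q * mixed_partial (0,1,0,1) g q
             = mixed_partial (0,1,1,0) g q * mixed_partial (1,0,0,1) g q)"

definition represents :: "jexpr \<Rightarrow> mindex \<Rightarrow> bool" where
  "represents e v \<longleftrightarrow> (\<forall>U g. levi_rank_one U g \<longrightarrow> (\<forall>p\<in>U. mixed_partial v g p = jeval (jet4 g p) e))"

lemma represents_JVar: "represents (JVar v) v"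
  by (simp add: represents_def jet4_def)

lemma represents_zeta_zetabar: "represents (JMul (JVar (0,1,1,0)) (JMul (JVar (1,0,0,1)) JInv)) (0,1,0,1)"
  unfolding represents_def
proof (intro allI impI ballI)
  fix U g p assume "levi_rank_one U g" "p \<in> U"
  then have "mixed_partial (1,0,1,0) g p \<noteq> 0"
    "mixed_partial (1,0,1,0) g p * mixed_partial (0,1,0,1) g p
       = mixed_partial (0,1,1,0) g p * mixed_partial (1,0,0,1) g p"
    by (auto simp: levi_rank_one_def)
  then show "mixed_partial (0,1,0,1) g p
      = jeval (jet4 g p) (JMul (JVar (0,1,1,0)) (JMul (JVar (1,0,0,1)) JInv))"
    by (simp add: jet4_def field_simps)
qed

lemma represents_jderiv:
  assumes k: "k < 4" and e: "represents e v"
  shows "represents (jderiv k e) (mi_succ k v)"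
  unfolding represents_def
proof (intro allI impI ballI)
  fix U g p assume "levi_rank_one U g" and p: "p \<in> U"
  then have g: "holomorphic4_on g U" and nz: "\<And>q. q \<in> U \<Longrightarrow> mixed_partial (1,0,1,0) g q \<noteq> 0"
    and ev: "\<And>q. q \<in> U \<Longrightarrow> mixed_partial v g q = jeval (jet4 g q) e"
    using e by (auto simp: levi_rank_one_def represents_def)
  have "mixed_partial (mi_succ k v) g p = partial k (mixed_partial v g) p"
    by (rule partial_mixed_partial[OF g k p, symmetric])
  also have "\<dots> = partial k (\<lambda>q. jeval (jet4 g q) e) p"
    by (rule partial_cong[OF _ ev p]) (use g in \<open>simp add: holomorphic4_on_def\<close>)
  also have "\<dots> = jeval (jet4 g p) (jderiv k e)"
    by (rule partial_jeval[OF g nz k p])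
  finally show "mixed_partial (mi_succ k v) g p = jeval (jet4 g p) (jderiv k e)" .
qed

lemma represents_funpow_jderiv:
  "k < 4 \<Longrightarrow> represents e v \<Longrightarrow> represents ((jderiv k ^^ n) e) ((mi_succ k ^^ n) v)"
  by (induction n) (simp_all add: represents_jderiv)

lemma represents_jsubst:
  assumes "represents e v" and "\<And>w. w \<in> jvars e \<Longrightarrow> represents (\<sigma> w) w"
  shows "represents (jsubst \<sigma> e) v"
  using assms unfolding represents_def by (simp add: jeval_jsubst jet4_def)

fun unmixed :: "mindex \<Rightarrow> bool" where
  "unmixed (a,b,c,d) \<longleftrightarrow> b = 0 \<or> d = 0"

definition expressible :: "mindex \<Rightarrow> bool" where
  "expressible v \<longleftrightarrow> (\<exists>e. jvars e \<subseteq> {w. mi_order w \<le> mi_order v \<and> unmixed w} \<and> represents e v)"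

lemma expressible_mi_succ:
  assumes "expressible v" and "k = 0 \<or> k = 2"
  shows "expressible (mi_succ k v)"
proof -
  obtain e where e: "jvars e \<subseteq> {w. mi_order w \<le> mi_order v \<and> unmixed w}" "represents e v"
    using assms(1) by (auto simp: expressible_def)
  have "unmixed w \<Longrightarrow> unmixed (mi_succ k w)" for w
    using assms(2) by (cases w) auto
  then have "jvars e \<union> mi_succ k ` jvars e \<subseteq> {w. mi_order w \<le> Suc (mi_order v) \<and> unmixed w}"
    using e(1) by (auto simp del: mi_succ.simps unmixed.simps mi_order.simps)
  then have "jvars (jderiv k e) \<subseteq> {w. mi_order w \<le> Suc (mi_order v) \<and> unmixed w}"
    using jvars_jderiv[of k e] by blast
  moreover have "represents (jderiv k e) (mi_succ k v)"
    using assms(2) by (intro represents_jderiv e(2)) auto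
  ultimately show ?thesis
    unfolding expressible_def by (intro exI[of _ "jderiv k e"]) simp
qed

lemma expressible_jsubst:
  assumes E: "represents E v" and n: "2 \<le> mi_order v"
    and vars: "\<And>w. w \<in> jvars E \<Longrightarrow> mi_order w \<le> mi_order v \<and> expressible w"
  shows "expressible v"
proof -
  have "\<forall>w\<in>jvars E. \<exists>e. jvars e \<subseteq> {u. mi_order u \<le> mi_order w \<and> unmixed u} \<and> represents e w"
    using vars by (auto simp: expressible_def)
  then obtain \<sigma> where \<sigma>: "\<forall>w\<in>jvars E.
      jvars (\<sigma> w) \<subseteq> {u. mi_order u \<le> mi_order w \<and> unmixed u} \<and> represents (\<sigma> w) w"
    by (metis bchoice)
  have "(\<Union>w\<in>jvars E. jvars (\<sigma> w)) \<subseteq> {u. mi_order u \<le> mi_order v \<and> unmixed u}"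
  proof (rule UN_least)
    fix w assume w: "w \<in> jvars E"
    then show "jvars (\<sigma> w) \<subseteq> {u. mi_order u \<le> mi_order v \<and> unmixed u}"
      using \<sigma> vars[OF w] by fastforce
  qed
  moreover have "(1,0,1,0) \<in> {u. mi_order u \<le> mi_order v \<and> unmixed u}"
    using n by simp
  ultimately have "jvars (jsubst \<sigma> E) \<subseteq> {u. mi_order u \<le> mi_order v \<and> unmixed u}"
    using jvars_jsubst[of \<sigma> E] by blast
  moreover have "represents (jsubst \<sigma> E) v"
    using E \<sigma> by (intro represents_jsubst) auto
  ultimately show ?thesis
    unfolding expressible_def by blast
qed

fun involves_z :: "mindex \<Rightarrow> bool" where
  "involves_z (a,b,c,d) \<longleftrightarrow> a \<noteq> 0 \<or> c \<noteq> 0"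

lemma involves_z_mi_succ: "involves_z w \<Longrightarrow> involves_z (mi_succ k w)"
  by (cases w) auto

lemma funpow_mi_succ_zeta: "(mi_succ 1 ^^ n) (a,b,c,d) = (a, b + n, c, d)"
  by (induction n) auto

lemma funpow_mi_succ_zetabar: "(mi_succ 3 ^^ n) (a,b,c,d) = (a, b, c, d + n)"
  by (induction n) auto

lemma expressible_if_unmixed_or_involves_z:
  assumes IH: "\<And>w. mi_order w < mi_order v \<Longrightarrow> expressible w"
    and v: "unmixed v \<or> involves_z v"
  shows "expressible v"
proof -
  obtain a b c d where v_eq: "v = (a,b,c,d)" by (cases v)
  consider "unmixed v" | "a \<noteq> 0" | "c \<noteq> 0" using v by (auto simp: v_eq)
  then show ?thesis
  proof cases
    case 1
    then show ?thesis
      unfolding expressible_def using represents_JVar[of v] by (intro exI[of _ "JVar v"]) auto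
  next
    case 2
    then have "expressible (mi_succ 0 (a - 1, b, c, d))"
      by (intro expressible_mi_succ IH) (auto simp: v_eq)
    with 2 show ?thesis by (simp add: v_eq)
  next
    case 3
    then have "expressible (mi_succ 2 (a, b, c - 1, d))"
      by (intro expressible_mi_succ IH) (auto simp: v_eq)
    with 3 show ?thesis by (simp add: v_eq)
  qed
qed

lemma expressible_zeta_zetabar:
  assumes IH: "\<And>w. mi_order w < mi_order (0, Suc b, 0, Suc d) \<Longrightarrow> expressible w"
  shows "expressible (0, Suc b, 0, Suc d)"
proof -
  let ?v = "(0, Suc b, 0, Suc d)"
  \<comment> \<open>\<open>e0\<close> is \<open>F_{zeta zbar} F_{z zetabar} / F_{z zbar}\<close>\<close>
  define e0 where "e0 = JMul (JVar (0,1,1,0)) (JMul (JVar (1,0,0,1)) JInv)"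
  define E where "E = (jderiv 1 ^^ b) ((jderiv 3 ^^ d) e0)"
  have "represents E ((mi_succ 1 ^^ b) ((mi_succ 3 ^^ d) (0,1,0,1)))"
    unfolding E_def e0_def
    by (intro represents_funpow_jderiv represents_zeta_zetabar) simp_all
  then have E: "represents E ?v"
    unfolding funpow_mi_succ_zetabar funpow_mi_succ_zeta by simp
  have "jvars e0 \<subseteq> {w. mi_order w \<le> 2 \<and> involves_z w}"
    by (auto simp: e0_def)
  then have "jvars E \<subseteq> {w. mi_order w \<le> 2 + d + b \<and> involves_z w}"
    unfolding E_def using involves_z_mi_succ by (intro jvars_funpow_jderiv)
  then have vars: "jvars E \<subseteq> {w. mi_order w \<le> mi_order ?v \<and> involves_z w}"
    by (simp add: add.commute)
  have expr: "expressible w" if "mi_order w \<le> mi_order ?v" "involves_z w" for w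
  proof (cases "mi_order w < mi_order ?v")
    case False
    then have "mi_order w = mi_order ?v" using that(1) by simp
    with that(2) IH show ?thesis
      by (intro expressible_if_unmixed_or_involves_z[of w]) simp_all
  qed (rule IH)
  show ?thesis
  proof (rule expressible_jsubst[OF E])
    show "2 \<le> mi_order ?v" by simp
    fix w assume "w \<in> jvars E"
    with vars have "mi_order w \<le> mi_order ?v" "involves_z w" by blast+
    then show "mi_order w \<le> mi_order ?v \<and> expressible w" using expr by blast
  qed
qed

theorem expressible: "expressible v"
proof (induction "mi_order v" arbitrary: v rule: less_induct)
  case less
  show ?case
  proof (cases "unmixed v \<or> involves_z v")
    case True
    with less show ?thesis by (rule expressible_if_unmixed_or_involves_z)
  next
    case False
    then obtain b d where v: "v = (0, Suc b, 0, Suc d)"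
      by (cases v) (metis Suc_pred involves_z.simps not_gr_zero unmixed.simps)
    show ?thesis
      unfolding v by (rule expressible_zeta_zetabar, rule less) (simp add: v)
  qed
qed

section \<open>Clearing denominators\<close>

definition uncurry4 :: "fun4 \<Rightarrow> cvec4 \<Rightarrow> complex" where
  "uncurry4 F = (\<lambda>(z,s,w,t). F z s w t)"

definition curry4 :: "(cvec4 \<Rightarrow> complex) \<Rightarrow> fun4" where
  "curry4 g = (\<lambda>z s w t. g (z,s,w,t))"

lemma curry4_uncurry4 [simp]: "curry4 (uncurry4 F) = F"
  by (simp add: curry4_def uncurry4_def)

lemma d_curry4:
  "dz (curry4 g) = curry4 (partial 0 g)" "dzeta (curry4 g) = curry4 (partial 1 g)"
  "dzbar (curry4 g) = curry4 (partial 2 g)" "dzetabar (curry4 g) = curry4 (partial 3 g)"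
  by (simp_all add: fun_eq_iff dz_def dzeta_def dzbar_def dzetabar_def curry4_def partial_def
      coord_def coord_upd_def)

lemma funpow_d_curry4:
  "(dz ^^ n) (curry4 g) = curry4 ((partial 0 ^^ n) g)" "(dzeta ^^ n) (curry4 g) = curry4 ((partial 1 ^^ n) g)"
  "(dzbar ^^ n) (curry4 g) = curry4 ((partial 2 ^^ n) g)" "(dzetabar ^^ n) (curry4 g) = curry4 ((partial 3 ^^ n) g)"
  by (induction n) (simp_all add: d_curry4)

lemma pd_eq_mixed_partial: "pd a b c d F z s w t = mixed_partial (a,b,c,d) (uncurry4 F) (z,s,w,t)"
proof -
  have "pd a b c d F = pd a b c d (curry4 (uncurry4 F))" by simp
  also have "\<dots> = curry4 (mixed_partial (a,b,c,d) (uncurry4 F))"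
    by (simp only: pd_def funpow_d_curry4 mixed_partial.simps)
  finally show ?thesis by (simp add: curry4_def)
qed

lemma holomorphic4_on_uncurry4:
  assumes "holo4 F U" shows "holomorphic4_on (uncurry4 F) U"
  unfolding holomorphic4_on_def
proof (intro conjI allI impI ballI)
  show "open U" "continuous_on U (uncurry4 F)"
    using assms by (simp_all add: holo4_def uncurry4_def)
  fix k :: nat and p assume "k < 4" "p \<in> U"
  moreover obtain z s w t where "p = (z,s,w,t)" by (cases p)
  ultimately show "(\<lambda>x. uncurry4 F (coord_upd k p x)) field_differentiable at (coord k p)"
    using assms
    by (cases "k = 0"; cases "k = 1"; cases "k = 2") (auto simp: holo4_def uncurry4_def coord_def coord_upd_def)
qed

lemma levi_rank_one_uncurry4:
  assumes "holo4 F U" and "\<forall>(z,s,w,t)\<in>U. pd 1 0 1 0 F z s w t \<noteq> 0"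
    and "\<forall>(z,s,w,t)\<in>U. pd 1 0 1 0 F z s w t * pd 0 1 0 1 F z s w t - pd 0 1 1 0 F z s w t * pd 1 0 0 1 F z s w t = 0"
  shows "levi_rank_one U (uncurry4 F)"
  using assms holomorphic4_on_uncurry4[OF assms(1)]
  by (auto simp: levi_rank_one_def pd_eq_mixed_partial)

fun ppow :: "pexpr \<Rightarrow> nat \<Rightarrow> pexpr" where
  "ppow p 0 = PConst 1"
| "ppow p (Suc n) = PMul p (ppow p n)"

lemma peval_ppow [simp]: "peval v (ppow p n) = peval v p ^ n"
  by (induction n) auto

lemma pvars_ppow: "pvars (ppow p n) \<subseteq> pvars p"
  by (induction n) auto

fun dvar_of :: "mindex \<Rightarrow> dvar" where
  "dvar_of (a,b,c,d) = (if d = 0 then VB a b c else VC a c d)"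

lemma dvar_of_allowed: "unmixed v \<Longrightarrow> mi_order v \<le> n \<Longrightarrow> dvar_of v \<in> allowed_vars n"
  by (cases v) (auto simp: allowed_vars_def)

lemma jet_dvar_of: "unmixed v \<Longrightarrow> jet F z s w t (dvar_of v) = jet4 (uncurry4 F) (z,s,w,t) v"
  by (cases v) (auto simp: jet4_def pd_eq_mixed_partial)

text \<open>\<open>to_pexpr e = (P, N)\<close> means \<open>e = P / F_{z zbar}^N\<close>; \<open>VB 1 0 1\<close> is the variable \<open>F_{z zbar}\<close>.\<close>

fun to_pexpr :: "jexpr \<Rightarrow> pexpr \<times> nat" where
  "to_pexpr (JConst c) = (PConst c, 0)"
| "to_pexpr (JVar v) = (PVar (dvar_of v), 0)"
| "to_pexpr JInv = (PConst 1, 1)"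
| "to_pexpr (JAdd e1 e2) = (case (to_pexpr e1, to_pexpr e2) of ((P1, N1), (P2, N2)) \<Rightarrow>
     (PAdd (PMul P1 (ppow (PVar (VB 1 0 1)) N2)) (PMul P2 (ppow (PVar (VB 1 0 1)) N1)), N1 + N2))"
| "to_pexpr (JMul e1 e2) = (case (to_pexpr e1, to_pexpr e2) of ((P1, N1), (P2, N2)) \<Rightarrow>
     (PMul P1 P2, N1 + N2))"

lemma pvars_to_pexpr: "pvars (fst (to_pexpr e)) \<subseteq> dvar_of ` jvars e \<union> {VB 1 0 1}"
  by (induction e) (auto simp: case_prod_beta dest: subsetD[OF pvars_ppow])

lemma jeval_to_pexpr:
  assumes G: "j (VB 1 0 1) = val (1,0,1,0)" "val (1,0,1,0) \<noteq> 0"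
    and vars: "\<And>w. w \<in> jvars e \<Longrightarrow> j (dvar_of w) = val w"
  shows "jeval val e = peval j (fst (to_pexpr e)) / val (1,0,1,0) ^ snd (to_pexpr e)"
  using vars
proof (induction e)
  case (JAdd e1 e2)
  obtain P1 N1 P2 N2 where p: "to_pexpr e1 = (P1, N1)" "to_pexpr e2 = (P2, N2)"
    by fastforce
  have e: "jeval val e1 = peval j P1 / val (1,0,1,0) ^ N1" "jeval val e2 = peval j P2 / val (1,0,1,0) ^ N2"
    using JAdd p by auto
  show ?case
    unfolding jeval.simps e using G by (simp add: p power_add field_simps)
next
  case (JMul e1 e2)
  then show ?case
    by (simp add: case_prod_beta power_add)
qed (simp_all add: G divide_inverse)

lemma pvars_to_pexpr_allowed:
  assumes vars: "jvars e \<subseteq> {w. mi_order w \<le> n \<and> unmixed w}" and n: "2 \<le> n"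
  shows "pvars (PMul (fst (to_pexpr e)) (PVar (VB 1 0 1))) \<subseteq> allowed_vars n"
proof -
  have "dvar_of ` jvars e \<subseteq> allowed_vars n"
  proof (rule image_subsetI)
    fix u assume "u \<in> jvars e"
    with vars show "dvar_of u \<in> allowed_vars n"
      by (intro dvar_of_allowed) blast+
  qed
  moreover have "VB 1 0 1 \<in> allowed_vars n"
    using n by (auto simp: allowed_vars_def)
  ultimately have "pvars (fst (to_pexpr e)) \<subseteq> allowed_vars n"
    by (intro subset_trans[OF pvars_to_pexpr]) blast
  with \<open>VB 1 0 1 \<in> allowed_vars n\<close> show ?thesis
    by simp
qed

text \<open>The extra factor \<open>F_{z zbar} / F_{z zbar}\<close> only serves to make the exponent positive.\<close>

lemma pd_eq_peval_to_pexpr: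
  assumes e: "represents e (a,b,c,d)" and vars: "jvars e \<subseteq> {w. unmixed w}"
    and F: "holo4 F U" "\<forall>(z,s,w,t)\<in>U. pd 1 0 1 0 F z s w t \<noteq> 0"
      "\<forall>(z,s,w,t)\<in>U. pd 1 0 1 0 F z s w t * pd 0 1 0 1 F z s w t
         - pd 0 1 1 0 F z s w t * pd 1 0 0 1 F z s w t = 0"
  shows "\<forall>(z,s,w,t)\<in>U. pd a b c d F z s w t
    = peval (jet F z s w t) (PMul (fst (to_pexpr e)) (PVar (VB 1 0 1)))
      / pd 1 0 1 0 F z s w t ^ Suc (snd (to_pexpr e))"
proof (intro ballI, clarify)
  fix z s w t assume q: "(z,s,w,t) \<in> U"
  have levi: "levi_rank_one U (uncurry4 F)"
    by (rule levi_rank_one_uncurry4[OF F])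
  then have G: "pd 1 0 1 0 F z s w t \<noteq> 0"
    using q by (simp add: levi_rank_one_def pd_eq_mixed_partial)
  have "pd a b c d F z s w t = jeval (jet4 (uncurry4 F) (z,s,w,t)) e"
    using e levi q by (simp add: represents_def pd_eq_mixed_partial)
  also have "\<dots> = peval (jet F z s w t) (fst (to_pexpr e)) / pd 1 0 1 0 F z s w t ^ snd (to_pexpr e)"
  proof (subst jeval_to_pexpr)
    show "jet F z s w t (dvar_of u) = jet4 (uncurry4 F) (z,s,w,t) u" if "u \<in> jvars e" for u
      using vars that by (intro jet_dvar_of) blast
  qed (use G in \<open>simp_all add: jet4_def pd_eq_mixed_partial\<close>)
  finally show "pd a b c d F z s w t
      = peval (jet F z s w t) (PMul (fst (to_pexpr e)) (PVar (VB 1 0 1)))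
        / pd 1 0 1 0 F z s w t ^ Suc (snd (to_pexpr e))"
    using G by simp
qed

theorem lemma7p1:
  fixes a b c d :: nat
  assumes "b \<ge> 1" and "d \<ge> 1"
  shows "\<exists>(P::pexpr) (N::nat). N \<ge> 1 \<and> pvars P \<subseteq> allowed_vars (a + b + c + d) \<and>
    (\<forall>(F::fun4) U. (0, 0, 0, 0) \<in> U \<and> holo4 F U \<and>
       (\<forall>(z,s,w,t)\<in>U. pd 1 0 1 0 F z s w t \<noteq> 0) \<and>
       (\<forall>(z,s,w,t)\<in>U. pd 1 0 1 0 F z s w t * pd 0 1 0 1 F z s w t
                        - pd 0 1 1 0 F z s w t * pd 1 0 0 1 F z s w t = 0)
     \<longrightarrow> (\<forall>(z,s,w,t)\<in>U. pd a b c d F z s w t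
                        = peval (jet F z s w t) P / (pd 1 0 1 0 F z s w t) ^ N))"
proof -
  obtain e where vars: "jvars e \<subseteq> {w. mi_order w \<le> a + b + c + d \<and> unmixed w}"
    and e: "represents e (a,b,c,d)"
    using expressible[of "(a,b,c,d)"] by (auto simp: expressible_def)
  have "pvars (PMul (fst (to_pexpr e)) (PVar (VB 1 0 1))) \<subseteq> allowed_vars (a + b + c + d)"
    using vars assms by (intro pvars_to_pexpr_allowed) auto
  moreover have "jvars e \<subseteq> {w. unmixed w}"
    using vars by blast
  ultimately show ?thesis
    using pd_eq_peval_to_pexpr[OF e]
    by (intro exI[of _ "PMul (fst (to_pexpr e)) (PVar (VB 1 0 1))"] exI[of _ "Suc (snd (to_pexpr e))"]
        conjI allI impI) (blast | simp)+
qed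

end
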